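(* Let $\mathcal T$ be a tube. If $S_1,S_2$ are two non-isomorphic simple objects of $\mathcal T$ with $\mathrm{Ext}^1_{\mathcal T}(S_1,S_2)=0$, then there exists an object $M$ of $\mathcal T$ such that $\mathrm{Ext}^1_{\mathcal T}(S_1,M)\cong\Bbbk$, $\mathrm{Ext}^1_{\mathcal T}(M,S_2)\cong\Bbbk$, and $\{S_1,S_2,M\}$ is a brick set.
   Context: $\Bbbk$ is algebraically closed. A tube (of rank $r\ge1$) is the $\Bbbk$-linear abelian category of finite-dimensional nilpotent representations of the quiver with $r$ vertices forming an oriented cycle. A brick is an object $M$ with $\mathrm{Hom}(M,M)=\Bbbk$; a brick set is a finite set of bricks $\{X_1,\dots,X_n\}$ with $\dim\mathrm{Hom}(X_i,X_j)=\delta_{ij}$. *)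

theory Defs
  imports "HOL-Library.Function_Algebras" "HOL-Computational_Algebra.Polynomial"
begin

definition alg_closed :: "'a::field itself \<Rightarrow> bool" where
  "alg_closed _ \<longleftrightarrow> (\<forall>p :: 'a poly. degree p \<ge> 1 \<longrightarrow> (\<exists>x. poly p x = 0))"

(* Finite matrices encoded as functions nat => nat => 'a (row, column), zero-padded.
   A representation of the cyclic quiver with r vertices 0..r-1 and arrows i -> (i+1) mod r
   is a pair (d, f): d i = dimension of the space at vertex i,
   f i = matrix (of size d((i+1) mod r) x d i) of the map V_i -> V_{(i+1) mod r}. *)
type_synonym 'a mat = "nat \<Rightarrow> nat \<Rightarrow> 'a"
type_synonym 'a rep = "(nat \<Rightarrow> nat) \<times> (nat \<Rightarrow> 'a mat)"

definition nxt :: "nat \<Rightarrow> nat \<Rightarrow> nat" where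
  "nxt r i = Suc i mod r"

definition mmul :: "'a::comm_ring_1 mat \<Rightarrow> 'a mat \<Rightarrow> nat \<Rightarrow> 'a mat" where
  "mmul A B n = (\<lambda>a c. \<Sum>b<n. A a b * B b c)"

definition mvec :: "'a::comm_ring_1 mat \<Rightarrow> nat \<Rightarrow> (nat \<Rightarrow> 'a) \<Rightarrow> (nat \<Rightarrow> 'a)" where
  "mvec A n v = (\<lambda>a. \<Sum>b<n. A a b * v b)"

definition idmat :: "nat \<Rightarrow> 'a::comm_ring_1 mat" where
  "idmat n = (\<lambda>a b. if a = b \<and> a < n then 1 else 0)"

fun path_map :: "nat \<Rightarrow> 'a::comm_ring_1 rep \<Rightarrow> nat \<Rightarrow> nat \<Rightarrow> 'a mat" where
  "path_map r M i 0 = idmat (fst M i)"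
| "path_map r M i (Suc k) = mmul (snd M ((i + k) mod r)) (path_map r M i k) (fst M ((i + k) mod r))"

(* an object of the tube of rank r: a finite-dimensional nilpotent representation *)
definition tube_obj :: "nat \<Rightarrow> 'a::comm_ring_1 rep \<Rightarrow> bool" where
  "tube_obj r M \<longleftrightarrow>
     (\<forall>i\<ge>r. fst M i = 0) \<and>
     (\<forall>i a b. (i \<ge> r \<or> a \<ge> fst M (nxt r i) \<or> b \<ge> fst M i) \<longrightarrow> snd M i a b = 0) \<and>
     (\<exists>N. \<forall>i<r. path_map r M i N = (\<lambda>a b. 0))"

definition vscale :: "'a::field \<Rightarrow> (nat \<Rightarrow> 'a) \<Rightarrow> (nat \<Rightarrow> 'a)" where
  "vscale c v = (\<lambda>a. c * v a)"

definition tscale :: "'a::field \<Rightarrow> (nat \<Rightarrow> 'a mat) \<Rightarrow> (nat \<Rightarrow> 'a mat)" where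
  "tscale c g = (\<lambda>i a b. c * g i a b)"

definition tdim :: "(nat \<Rightarrow> 'a::field mat) set \<Rightarrow> nat" where
  "tdim S = vector_space.dim tscale S"

(* C0(M,N) = (+)_i Hom_k(M_i, N_i) *)
definition C0 :: "nat \<Rightarrow> 'a::field rep \<Rightarrow> 'a rep \<Rightarrow> (nat \<Rightarrow> 'a mat) set" where
  "C0 r M N = {g. \<forall>i a b. (i \<ge> r \<or> a \<ge> fst N i \<or> b \<ge> fst M i) \<longrightarrow> g i a b = 0}"

(* C1(M,N) = (+)_{arrows i -> i+1} Hom_k(M_i, N_{i+1}) *)
definition C1 :: "nat \<Rightarrow> 'a::field rep \<Rightarrow> 'a rep \<Rightarrow> (nat \<Rightarrow> 'a mat) set" where
  "C1 r M N = {h. \<forall>i a b. (i \<ge> r \<or> a \<ge> fst N (nxt r i) \<or> b \<ge> fst M i) \<longrightarrow> h i a b = 0}"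

definition delta :: "nat \<Rightarrow> 'a::field rep \<Rightarrow> 'a rep \<Rightarrow> (nat \<Rightarrow> 'a mat) \<Rightarrow> (nat \<Rightarrow> 'a mat)" where
  "delta r M N g = (\<lambda>i a b. if i < r then
       mmul (g (nxt r i)) (snd M i) (fst M (nxt r i)) a b - mmul (snd N i) (g i) (fst N i) a b
     else 0)"

definition Hom :: "nat \<Rightarrow> 'a::field rep \<Rightarrow> 'a rep \<Rightarrow> (nat \<Rightarrow> 'a mat) set" where
  "Hom r M N = {g \<in> C0 r M N. delta r M N g = (\<lambda>i a b. 0)}"

definition hom_dim :: "nat \<Rightarrow> 'a::field rep \<Rightarrow> 'a rep \<Rightarrow> nat" where
  "hom_dim r M N = tdim (Hom r M N)"

(* Ext^1(M,N) = cokernel of delta : C0 -> C1 (standard projective resolution of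
   representations of a quiver); its dimension *)
definition ext1_dim :: "nat \<Rightarrow> 'a::field rep \<Rightarrow> 'a rep \<Rightarrow> nat" where
  "ext1_dim r M N = tdim (C1 r M N) - tdim (delta r M N ` C0 r M N)"

definition hcomp :: "'a::field rep \<Rightarrow> (nat \<Rightarrow> 'a mat) \<Rightarrow> (nat \<Rightarrow> 'a mat) \<Rightarrow> (nat \<Rightarrow> 'a mat)" where
  "hcomp M h g = (\<lambda>i. mmul (h i) (g i) (fst M i))"

definition iso :: "nat \<Rightarrow> 'a::field rep \<Rightarrow> 'a rep \<Rightarrow> bool" where
  "iso r M N \<longleftrightarrow> (\<exists>g \<in> Hom r M N. \<exists>h \<in> Hom r N M.
      (\<forall>i<r. hcomp N h g i = idmat (fst M i)) \<and> (\<forall>i<r. hcomp M g h i = idmat (fst N i)))"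

(* the space at vertex i, as zero-padded coordinate vectors *)
definition space :: "'a::field rep \<Rightarrow> nat \<Rightarrow> (nat \<Rightarrow> 'a) set" where
  "space M i = {v. \<forall>a\<ge>fst M i. v a = 0}"

definition subrep :: "nat \<Rightarrow> 'a::field rep \<Rightarrow> (nat \<Rightarrow> (nat \<Rightarrow> 'a) set) \<Rightarrow> bool" where
  "subrep r M U \<longleftrightarrow> (\<forall>i<r. module.subspace vscale (U i) \<and> U i \<subseteq> space M i \<and>
      mvec (snd M i) (fst M i) ` U i \<subseteq> U (nxt r i))"

definition simple_obj :: "nat \<Rightarrow> 'a::field rep \<Rightarrow> bool" where
  "simple_obj r M \<longleftrightarrow> tube_obj r M \<and> (\<exists>i<r. fst M i > 0) \<and>
     (\<forall>U. subrep r M U \<longrightarrow> (\<forall>i<r. U i = {0}) \<or> (\<forall>i<r. U i = space M i))"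

(* brick set given as a list X_1..X_n: dim Hom(X_i,X_j) = delta_ij (implies each X_i a brick) *)
definition brick_set :: "nat \<Rightarrow> 'a::field rep list \<Rightarrow> bool" where
  "brick_set r Xs \<longleftrightarrow> (\<forall>X\<in>set Xs. tube_obj r X) \<and>
     (\<forall>i<length Xs. \<forall>j<length Xs. hom_dim r (Xs ! i) (Xs ! j) = (if i = j then 1 else 0))"

end

theory Submission
  imports Defs
begin

(* The simple objects of a tube are the one-dimensional representations S(m) at single vertices m,
   and Ext^1(S(i), S(j)) is nonzero exactly when j = i + 1. So j = i + d with 1 < d < r, and M is
   the thin representation with one-dimensional spaces at the vertices i + 1, ..., i + d - 1 and
   identity maps along the arrows between them. Between thin representations with disjoint
   supports there are no 0-cochains, so Ext^1 is the whole space of 1-cochains, whose dimension is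
   the number of arrows from one support into the other: one from i into the arc and one from the
   arc into j. The arc is connected by arrows, so End(M) is the field. *)

lemma singleton_psubset_lessThan:
  fixes k k' r :: nat
  assumes "k < r" "k' < r" "k \<noteq> k'"
  shows "{k} \<subset> {..<r}"
proof -
  have "k' \<in> {..<r} - {k}" using assms(2,3) by simp
  then show ?thesis using assms(1) by blast
qed

lemma nxt_mod_add: "nxt r ((i + t) mod r) = (i + Suc t) mod r"
  by (simp add: nxt_def mod_Suc_eq)

lemma mod_add_left_cancel_less:
  fixes i t t' r :: nat
  assumes "(i + t) mod r = (i + t') mod r" "t < r" "t' < r"
  shows "t = t'"
proof -
  have "int r dvd int t - int t'"
    using assms(1) by (metis mod_eq_dvd_iff of_nat_mod add_diff_cancel_left of_nat_add)
  then show ?thesis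
    using dvd_imp_le_int[of "int t - int t'" "int r"] assms(2,3) by linarith
qed

lemma mod_add_neq_self:
  fixes i d r :: nat
  assumes "i < r" "0 < d" "d < r"
  shows "(i + d) mod r \<noteq> i"
proof
  assume "(i + d) mod r = i"
  then have "(i + d) mod r = (i + 0) mod r" using assms(1) by simp
  then show False using mod_add_left_cancel_less[where i = i and r = r and t = d and t' = 0] assms
    by simp
qed

lemma sum_fun_apply: "sum f S x = (\<Sum>v\<in>S. f v x)"
  by (induction S rule: infinite_finite_induct) auto

lemma mult_indicator_left: "(if p then 1 else 0) * x = (if p then x else (0::'a::semiring_1))"
  by simp

lemma mmul_0_1: "mmul A B (if p then 1 else 0) a b = (if p then A a 0 * B 0 b else 0)"
  by (simp add: mmul_def)

lemma mmul_idmat_left: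
  assumes "\<And>a b. n \<le> a \<Longrightarrow> A a b = 0"
  shows "mmul (idmat n) A n = A"
proof (intro ext)
  fix a c
  show "mmul (idmat n) A n a c = A a c"
    using assms[of a c] by (cases "a < n") (simp_all add: mmul_def idmat_def mult_indicator_left)
qed

lemma mmul_idmat_right:
  assumes "\<And>a b. n \<le> b \<Longrightarrow> A a b = 0"
  shows "mmul A (idmat n) n = A"
proof (intro ext)
  fix a c
  show "mmul A (idmat n) n a c = A a c"
    using assms[of c a] by (cases "c < n")
      (simp_all add: mmul_def idmat_def mult.commute[of "A _ _"] mult_indicator_left)
qed

lemma mvec_mmul: "mvec (mmul A B n) m v = mvec A n (mvec B m v)"
proof (intro ext)
  fix c
  have "mvec (mmul A B n) m v c = (\<Sum>a<m. \<Sum>b<n. A c b * B b a * v a)"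
    by (simp add: mvec_def mmul_def sum_distrib_right)
  also have "\<dots> = (\<Sum>b<n. \<Sum>a<m. A c b * B b a * v a)" by (rule sum.swap)
  also have "\<dots> = mvec A n (mvec B m v) c"
    by (simp add: mvec_def sum_distrib_left mult.assoc)
  finally show "mvec (mmul A B n) m v c = mvec A n (mvec B m v) c" .
qed

lemma mvec_idmat:
  assumes "y \<in> space M i"
  shows "mvec (idmat (fst M i)) (fst M i) y = y"
proof (intro ext)
  fix a
  show "mvec (idmat (fst M i)) (fst M i) y a = y a"
    using assms by (cases "a < fst M i") (auto simp: mvec_def idmat_def space_def mult_indicator_left)
qed

lemma mvec_vscale: "mvec A n (vscale c y) = vscale c (mvec A n y)"
  by (simp add: mvec_def vscale_def fun_eq_iff sum_distrib_left mult.left_commute)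

lemma mvec_zero: "mvec A n 0 = 0"
  by (simp add: mvec_def fun_eq_iff)

lemma vscale_zero: "vscale c 0 = 0"
  by (simp add: vscale_def fun_eq_iff)

lemma delta_zero: "delta r M N 0 = 0"
  by (auto simp: delta_def mmul_def fun_eq_iff)

lemma vector_space_tscale: "vector_space (tscale :: 'a::field \<Rightarrow> _)"
  by unfold_locales (auto simp: tscale_def fun_eq_iff algebra_simps)

lemma module_vscale: "module (vscale :: 'a::field \<Rightarrow> _)"
  by unfold_locales (auto simp: vscale_def fun_eq_iff algebra_simps)

lemma tdim_line:
  fixes E :: "nat \<Rightarrow> 'a::field mat"
  assumes "E \<noteq> 0"
  shows "tdim (range (\<lambda>c. tscale c E)) = 1"
proof -
  interpret vector_space "tscale :: 'a \<Rightarrow> _" by (rule vector_space_tscale)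
  show ?thesis unfolding tdim_def
  proof (rule dim_unique[of "{E}"])
    have "E = tscale 1 E" by (simp add: tscale_def)
    then show "{E} \<subseteq> range (\<lambda>c. tscale c E)" by blast
    show "range (\<lambda>c. tscale c E) \<subseteq> span {E}"
      by (auto intro: span_scale span_base)
    show "independent {E}" using assms by (simp add: independent_insert)
  qed auto
qed

(* Between spaces of dimension at most one only the (0,0)-entries of matrices can be nonzero. *)
definition corner_maps :: "nat set \<Rightarrow> (nat \<Rightarrow> 'a::zero mat) set" where
  "corner_maps K = {g. \<forall>k a b. g k a b \<noteq> 0 \<longrightarrow> k \<in> K \<and> a = 0 \<and> b = 0}"

definition corner_unit :: "nat set \<Rightarrow> nat \<Rightarrow> 'a::zero_neq_one mat" where
  "corner_unit K = (\<lambda>k a b. if k \<in> K \<and> a = 0 \<and> b = 0 then 1 else 0)"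

lemma corner_unit_nonzero: "k \<in> K \<Longrightarrow> corner_unit K \<noteq> 0"
  by (auto simp: corner_unit_def fun_eq_iff)

lemma corner_unit_eq_iff: "corner_unit {k} = corner_unit {k'} \<longleftrightarrow> k = k'"
  by (auto simp: corner_unit_def fun_eq_iff)

lemma corner_maps_empty: "corner_maps {} = {0}"
  by (auto simp: corner_maps_def fun_eq_iff)

lemma corner_map_eq_sum:
  assumes "finite K" "g \<in> corner_maps K"
  shows "g = (\<Sum>l\<in>K. tscale (g l 0 0) (corner_unit {l}))"
proof (intro ext)
  fix k a b
  have "(\<Sum>l\<in>K. tscale (g l 0 0) (corner_unit {l})) k a b =
      (\<Sum>l\<in>K. if l = k then (if a = 0 \<and> b = 0 then g k 0 0 else 0) else 0)"
    by (auto simp: sum_fun_apply tscale_def corner_unit_def intro!: sum.cong)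
  also have "\<dots> = g k a b"
    using assms by (auto simp: corner_maps_def)
  finally show "g k a b = (\<Sum>l\<in>K. tscale (g l 0 0) (corner_unit {l})) k a b" by simp
qed

lemma tdim_corner_maps:
  assumes "finite K"
  shows "tdim (corner_maps K :: (nat \<Rightarrow> 'a::field mat) set) = card K"
proof -
  interpret vector_space "tscale :: 'a \<Rightarrow> _" by (rule vector_space_tscale)
  define B :: "(nat \<Rightarrow> 'a mat) set" where "B = (\<lambda>k. corner_unit {k}) ` K"
  show ?thesis unfolding tdim_def
  proof (rule dim_unique[of B])
    show "B \<subseteq> corner_maps K"
      by (auto simp: B_def corner_maps_def corner_unit_def split: if_splits)
    show "corner_maps K \<subseteq> span B"
    proof
      fix g :: "nat \<Rightarrow> 'a mat" assume "g \<in> corner_maps K"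
      then have "g = (\<Sum>k\<in>K. tscale (g k 0 0) (corner_unit {k}))"
        by (rule corner_map_eq_sum[OF assms])
      also have "\<dots> \<in> span B"
        by (intro span_sum span_scale span_base) (auto simp: B_def)
      finally show "g \<in> span B" .
    qed
    show "independent B"
      unfolding independent_explicit_finite_subsets
    proof (intro allI impI ballI)
      fix S u v
      assume S: "S \<subseteq> B" "finite S" and u: "(\<Sum>w\<in>S. tscale (u w) w) = 0" and v: "v \<in> S"
      obtain k where k: "v = corner_unit {k}" using S(1) v by (auto simp: B_def)
      have "u w * w k 0 0 = (if w = v then u v else 0)" if w: "w \<in> S" for w
      proof -
        obtain l where "w = corner_unit {l}" using w S(1) by (auto simp: B_def)
        then show ?thesis using corner_unit_eq_iff[of l k] by (auto simp: k corner_unit_def)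
      qed
      then have "(\<Sum>w\<in>S. tscale (u w) w) k 0 0 = u v"
        using S(2) v by (simp add: sum_fun_apply tscale_def cong: sum.cong)
      then show "u v = 0" by (simp add: u)
    qed
    show "card B = card K"
      unfolding B_def by (rule card_image) (simp add: inj_on_def corner_unit_eq_iff)
  qed
qed

lemma tdim_zero: "tdim {0 :: nat \<Rightarrow> 'a::field mat} = 0"
  using tdim_corner_maps[of "{}"] by (simp add: corner_maps_empty)

section \<open>Thin representations\<close>

definition thin_rep :: "nat \<Rightarrow> nat set \<Rightarrow> 'a::comm_ring_1 rep" where
  "thin_rep r P = (\<lambda>k. if k \<in> P then 1 else 0,
                   \<lambda>k a b. if a = 0 \<and> b = 0 \<and> k \<in> P \<and> nxt r k \<in> P then 1 else 0)"

(* An arrow of the cycle is identified with its source k; its target is nxt r k. *)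
definition arrows :: "nat \<Rightarrow> nat set \<Rightarrow> nat set \<Rightarrow> nat set" where
  "arrows r P Q = {k. k < r \<and> k \<in> P \<and> nxt r k \<in> Q}"

definition arrow_connected :: "nat \<Rightarrow> nat set \<Rightarrow> bool" where
  "arrow_connected r P \<longleftrightarrow>
     (\<exists>k0\<in>P. P \<subseteq> {(k, nxt r k) | k. k \<in> arrows r P P}\<^sup>* `` {k0})"

lemma arrow_connected_singleton: "arrow_connected r {k}"
  by (simp add: arrow_connected_def)

lemma arrow_connected_const:
  assumes "arrow_connected r P" "\<And>k. k \<in> arrows r P P \<Longrightarrow> f (nxt r k) = f k"
    and "k \<in> P" "k' \<in> P"
  shows "f k = f k'"
proof -
  let ?R = "{(k, nxt r k) | k. k \<in> arrows r P P}"
  obtain k0 where reach: "P \<subseteq> ?R\<^sup>* `` {k0}"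
    using assms(1) unfolding arrow_connected_def by blast
  have const: "f l = f k0" if "(k0, l) \<in> ?R\<^sup>*" for l
    using that
  proof (induction rule: rtrancl_induct)
    case (step y z)
    then have "y \<in> arrows r P P" "z = nxt r y" by auto
    then show ?case using step.IH assms(2) by simp
  qed simp
  have "(k0, k) \<in> ?R\<^sup>*" "(k0, k') \<in> ?R\<^sup>*"
    using reach assms(3,4) by auto
  then show ?thesis using const[of k] const[of k'] by simp
qed

lemma C0_thin_rep:
  "C0 r (thin_rep r P) (thin_rep r Q) =
    (corner_maps ({..<r} \<inter> P \<inter> Q) :: (nat \<Rightarrow> 'a::field mat) set)"
proof -
  have "(i \<ge> r \<or> a \<ge> fst (thin_rep r Q :: 'a rep) i \<or> b \<ge> fst (thin_rep r P :: 'a rep) i)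
      \<longleftrightarrow> \<not> (i \<in> {..<r} \<inter> P \<inter> Q \<and> a = 0 \<and> b = 0)" for i a b
    by (auto simp: thin_rep_def)
  then show ?thesis unfolding C0_def corner_maps_def by blast
qed

lemma C1_thin_rep:
  "C1 r (thin_rep r P) (thin_rep r Q) =
    (corner_maps (arrows r P Q) :: (nat \<Rightarrow> 'a::field mat) set)"
proof -
  have "(i \<ge> r \<or> a \<ge> fst (thin_rep r Q :: 'a rep) (nxt r i) \<or>
      b \<ge> fst (thin_rep r P :: 'a rep) i) \<longleftrightarrow>
      \<not> (i \<in> arrows r P Q \<and> a = 0 \<and> b = 0)" for i a b
    by (auto simp: thin_rep_def arrows_def)
  then show ?thesis unfolding C1_def corner_maps_def by blast
qed

lemma delta_thin_rep:
  "delta r (thin_rep r P) (thin_rep r Q) g k a b =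
    (if k < r then
       (if b = 0 \<and> k \<in> P \<and> nxt r k \<in> P then g (nxt r k) a 0 else 0)
       - (if a = 0 \<and> k \<in> Q \<and> nxt r k \<in> Q then g k 0 b else 0)
     else 0)"
  by (simp add: delta_def thin_rep_def mmul_0_1)

lemma ext1_dim_thin_rep:
  assumes "{..<r} \<inter> P \<inter> Q = {}"
  shows "ext1_dim r (thin_rep r P :: 'a::field rep) (thin_rep r Q) = card (arrows r P Q)"
proof -
  have "finite (arrows r P Q)" by (simp add: arrows_def)
  then show ?thesis
    by (simp add: ext1_dim_def C0_thin_rep C1_thin_rep assms corner_maps_empty delta_zero
        tdim_corner_maps tdim_zero)
qed

lemma hom_dim_thin_rep_disjoint:
  assumes "{..<r} \<inter> P \<inter> Q = {}"
  shows "hom_dim r (thin_rep r P :: 'a::field rep) (thin_rep r Q) = 0"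
proof -
  have "Hom r (thin_rep r P :: 'a rep) (thin_rep r Q) = {0}"
    using delta_zero[of r "thin_rep r P :: 'a rep" "thin_rep r Q"]
    by (auto simp: Hom_def C0_thin_rep assms corner_maps_empty zero_fun_def)
  then show ?thesis by (simp add: hom_dim_def tdim_zero)
qed

lemma Hom_thin_rep_self:
  assumes "P \<subseteq> {..<r}" "arrow_connected r P"
  shows "Hom r (thin_rep r P :: 'a::field rep) (thin_rep r P) =
    range (\<lambda>c. tscale c (corner_unit P))"
proof (intro equalityI subsetI)
  fix g :: "nat \<Rightarrow> 'a mat"
  assume g: "g \<in> Hom r (thin_rep r P) (thin_rep r P)"
  then have gP: "g \<in> corner_maps P"
    using assms(1) by (auto simp: Hom_def C0_thin_rep Int_absorb1)
  have "g (nxt r k) 0 0 = g k 0 0" if "k \<in> arrows r P P" for k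
    using g that delta_thin_rep[of r P P g k 0 0] by (auto simp: Hom_def arrows_def fun_eq_iff)
  moreover obtain k0 where "k0 \<in> P"
    using assms(2) unfolding arrow_connected_def by blast
  ultimately have "g k 0 0 = g k0 0 0" if "k \<in> P" for k
    using arrow_connected_const[OF assms(2), of "\<lambda>k. g k 0 0"] that by blast
  then have "g = tscale (g k0 0 0) (corner_unit P)"
    using gP by (auto simp: corner_maps_def corner_unit_def tscale_def fun_eq_iff)
  then show "g \<in> range (\<lambda>c. tscale c (corner_unit P))" by blast
next
  fix g :: "nat \<Rightarrow> 'a mat"
  assume "g \<in> range (\<lambda>c. tscale c (corner_unit P))"
  then obtain c where c: "g = tscale c (corner_unit P)" by blast
  have "g \<in> C0 r (thin_rep r P) (thin_rep r P)"
    using assms(1) by (auto simp: C0_thin_rep c corner_maps_def tscale_def corner_unit_def)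
  moreover have "delta r (thin_rep r P) (thin_rep r P) g = (\<lambda>i a b. 0)"
    by (auto simp: fun_eq_iff delta_thin_rep c tscale_def corner_unit_def)
  ultimately show "g \<in> Hom r (thin_rep r P) (thin_rep r P)" by (simp add: Hom_def)
qed

lemma hom_dim_thin_rep_self:
  assumes "P \<subseteq> {..<r}" "arrow_connected r P"
  shows "hom_dim r (thin_rep r P :: 'a::field rep) (thin_rep r P) = 1"
proof -
  obtain k0 where "k0 \<in> P"
    using assms(2) unfolding arrow_connected_def by blast
  then show ?thesis
    by (simp add: hom_dim_def Hom_thin_rep_self[OF assms] tdim_line corner_unit_nonzero)
qed

lemma path_map_thin_rep:
  assumes "k < r"
  shows "path_map r (thin_rep r P :: 'a::comm_ring_1 rep) k n a b =
     (if a = 0 \<and> b = 0 \<and> (\<forall>t\<le>n. (k + t) mod r \<in> P) then 1 else 0)"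
proof (induction n arbitrary: a b)
  case 0
  then show ?case using assms by (simp add: thin_rep_def idmat_def)
next
  case (Suc n)
  have "path_map r (thin_rep r P :: 'a rep) k (Suc n) a b =
     (if (k + n) mod r \<in> P
      then snd (thin_rep r P :: 'a rep) ((k + n) mod r) a 0 * path_map r (thin_rep r P) k n 0 b
      else 0)"
    by (simp add: thin_rep_def mmul_0_1 del: path_map.simps(1))
  also have "\<dots> = (if a = 0 \<and> b = 0 \<and> (\<forall>t\<le>Suc n. (k + t) mod r \<in> P) then 1 else 0)"
    unfolding Suc.IH using nxt_mod_add[of r k n] by (auto simp: thin_rep_def le_Suc_eq)
  finally show ?case .
qed

lemma tube_obj_thin_rep:
  assumes "P \<subset> {..<r}"
  shows "tube_obj r (thin_rep r P :: 'a::comm_ring_1 rep)"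
  unfolding tube_obj_def
proof (intro conjI)
  show "\<forall>i\<ge>r. fst (thin_rep r P :: 'a rep) i = 0"
    and "\<forall>i a b. (i \<ge> r \<or> a \<ge> fst (thin_rep r P :: 'a rep) (nxt r i) \<or>
        b \<ge> fst (thin_rep r P :: 'a rep) i) \<longrightarrow> snd (thin_rep r P :: 'a rep) i a b = 0"
    using assms by (auto simp: thin_rep_def)
  obtain i where i: "i < r" "i \<notin> P" using assms by blast
  have "path_map r (thin_rep r P :: 'a rep) k r = (\<lambda>a b. 0)" if k: "k < r" for k
  proof -
    define t where "t = (if k \<le> i then i - k else i + r - k)"
    have "t \<le> r" "(k + t) mod r = i" using k i(1) by (auto simp: t_def)
    then show ?thesis using i(2) by (auto simp: fun_eq_iff path_map_thin_rep[OF k])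
  qed
  then show "\<exists>N. \<forall>i<r. path_map r (thin_rep r P :: 'a rep) i N = (\<lambda>a b. 0)" by blast
qed

lemma brick_set_thin_reps:
  assumes "\<forall>P\<in>set Ps. P \<subset> {..<r} \<and> arrow_connected r P"
    and "distinct Ps" and "pairwise disjnt (set Ps)"
  shows "brick_set r (map (thin_rep r) Ps :: 'a::field rep list)"
  unfolding brick_set_def
proof (intro conjI allI impI)
  show "\<forall>X\<in>set (map (thin_rep r) Ps :: 'a rep list). tube_obj r X"
    using assms(1) by (auto intro: tube_obj_thin_rep)
  fix a b
  assume "a < length (map (thin_rep r) Ps :: 'a rep list)"
    and "b < length (map (thin_rep r) Ps :: 'a rep list)"
  then have ab: "a < length Ps" "b < length Ps" by simp_all
  then have in_Ps: "Ps ! a \<in> set Ps" "Ps ! b \<in> set Ps" by simp_all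
  have "hom_dim r (thin_rep r (Ps ! a) :: 'a rep) (thin_rep r (Ps ! b)) = (if a = b then 1 else 0)"
  proof (cases "a = b")
    case True
    have "Ps ! a \<subseteq> {..<r}" "arrow_connected r (Ps ! a)" using assms(1) in_Ps by auto
    then show ?thesis using True by (simp add: hom_dim_thin_rep_self)
  next
    case False
    then have "Ps ! a \<noteq> Ps ! b" using assms(2) ab by (simp add: nth_eq_iff_index_eq)
    then have "Ps ! a \<inter> Ps ! b = {}" using assms(3) in_Ps by (auto simp: pairwise_def disjnt_def)
    then show ?thesis using False by (simp add: hom_dim_thin_rep_disjoint Int_assoc)
  qed
  then show "hom_dim r (map (thin_rep r) Ps ! a :: 'a rep) (map (thin_rep r) Ps ! b) =
      (if a = b then 1 else 0)"
    using ab by simp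
qed

section \<open>Simple objects\<close>

definition vertex_rep :: "nat \<Rightarrow> 'a::zero_neq_one rep" where
  "vertex_rep m = (\<lambda>k. if k = m then 1 else 0, \<lambda>_ _ _. 0)"

lemma thin_rep_singleton:
  assumes "2 \<le> r" "m < r"
  shows "thin_rep r {m} = vertex_rep m"
proof -
  have "nxt r m \<noteq> m"
    using assms by (simp add: nxt_def mod_Suc)
  then show ?thesis by (auto simp: thin_rep_def vertex_rep_def fun_eq_iff)
qed

lemma iso_refl:
  fixes M :: "'a::field rep"
  assumes "tube_obj r M"
  shows "iso r M M"
proof -
  have dim: "\<And>i. r \<le> i \<Longrightarrow> fst M i = 0"
    and arrow: "\<And>i a b. i \<ge> r \<or> a \<ge> fst M (nxt r i) \<or> b \<ge> fst M i \<Longrightarrow> snd M i a b = 0"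
    using assms by (auto simp: tube_obj_def)
  define g :: "nat \<Rightarrow> 'a mat" where "g i = idmat (fst M i)" for i
  have "g \<in> C0 r M M"
    using dim by (auto simp: C0_def g_def idmat_def)
  moreover have "delta r M M g = (\<lambda>i a b. 0)"
  proof -
    have "mmul (g (nxt r i)) (snd M i) (fst M (nxt r i)) = snd M i"
      and "mmul (snd M i) (g i) (fst M i) = snd M i" for i
      using arrow by (simp_all add: g_def mmul_idmat_left mmul_idmat_right)
    then show ?thesis by (simp add: delta_def fun_eq_iff)
  qed
  ultimately have "g \<in> Hom r M M" by (simp add: Hom_def)
  moreover have "hcomp M g g i = idmat (fst M i)" for i
    unfolding hcomp_def g_def by (rule mmul_idmat_left) (simp add: idmat_def)
  ultimately show ?thesis unfolding iso_def by blast
qed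

definition unit_vec :: "nat \<Rightarrow> nat \<Rightarrow> 'a::zero_neq_one" where
  "unit_vec a = (\<lambda>b. if b = a then 1 else 0)"

lemma unit_vec_in_space_iff: "unit_vec a \<in> space M i \<longleftrightarrow> a < fst M i"
  by (auto simp: unit_vec_def space_def)

lemma unit_vec_nonzero: "unit_vec a \<noteq> 0"
  by (auto simp: unit_vec_def fun_eq_iff)

lemma dim_eq_0_if_space_trivial: "space M i \<subseteq> {0} \<Longrightarrow> fst M i = 0"
  using unit_vec_in_space_iff[of 0 M i] unit_vec_nonzero[of 0] by auto

lemma dim_le_1_if_space_line:
  assumes "space M i \<subseteq> range (\<lambda>c. vscale c y)"
  shows "fst M i \<le> 1"
proof (rule ccontr)
  assume "\<not> fst M i \<le> 1"
  then have "unit_vec 0 \<in> space M i" "unit_vec 1 \<in> space M i"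
    by (simp_all add: unit_vec_in_space_iff)
  then obtain c c' where "unit_vec 0 = vscale c y" "unit_vec 1 = vscale c' y"
    using assms by blast
  then have "c * y 0 = 1" "c' * y 0 = 0" "c' * y 1 = 1" "c * y 1 = 0"
    by (auto simp: unit_vec_def vscale_def fun_eq_iff dest: spec[of _ 0] spec[of _ 1])
  then show False by (metis mult_zero_left mult_zero_right no_zero_divisors zero_neq_one)
qed

lemma mvec_arrow_in_space:
  assumes "tube_obj r S"
  shows "mvec (snd S k) (fst S k) y \<in> space S (nxt r k)"
  using assms by (simp add: space_def mvec_def tube_obj_def)

(* Follow a nonzero vector along the nilpotent path maps until it is killed. *)
lemma tube_obj_killed_vector:
  assumes "tube_obj r S" "v < r" "0 < fst S v"
  obtains m y where "m < r" "y \<in> space S m" "y \<noteq> 0" "mvec (snd S m) (fst S m) y = 0"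
proof -
  obtain N where N: "path_map r S v N = (\<lambda>a b. 0)"
    using assms(1,2) by (auto simp: tube_obj_def)
  define x where "x n = mvec (path_map r S v n) (fst S v) (unit_vec 0)" for n
  have x_Suc: "x (Suc n) = mvec (snd S ((v + n) mod r)) (fst S ((v + n) mod r)) (x n)" for n
    by (simp add: x_def mvec_mmul)
  have x_0: "x 0 = unit_vec 0"
    using assms(3) by (simp add: x_def mvec_idmat unit_vec_in_space_iff)
  have x_space: "x n \<in> space S ((v + n) mod r)" for n
  proof (induction n)
    case 0
    then show ?case using assms(2,3) by (simp add: x_0 unit_vec_in_space_iff)
  next
    case (Suc n)
    then show ?case using mvec_arrow_in_space[OF assms(1)] nxt_mod_add[of r v n] by (metis x_Suc)
  qed
  have "\<exists>n. x n \<noteq> 0 \<and> x (Suc n) = 0"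
  proof (rule ccontr)
    assume "\<nexists>n. x n \<noteq> 0 \<and> x (Suc n) = 0"
    then have "x n \<noteq> 0" for n by (induction n) (auto simp: x_0 unit_vec_nonzero)
    moreover have "x N = 0" by (simp add: x_def N mvec_def fun_eq_iff)
    ultimately show False by blast
  qed
  then obtain n where "x n \<noteq> 0" "x (Suc n) = 0" by blast
  then show thesis
    using that[of "(v + n) mod r" "x n"] x_space[of n] x_Suc[of n] assms(2) by simp
qed

lemma subrep_vertex_line:
  assumes "y \<in> space S m" "mvec (snd S m) (fst S m) y = 0"
  shows "subrep r S (\<lambda>k. if k = m then range (\<lambda>c. vscale c y) else {0})"
    (is "subrep r S ?U")
  unfolding subrep_def
proof (intro allI impI conjI)
  interpret module "vscale :: 'a \<Rightarrow> _" by (rule module_vscale)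
  have line: "subspace (range (\<lambda>c. vscale c y))"
    using subspace_span[of "{y}"] by (simp only: span_singleton)
  fix k
  show "subspace (?U k)"
    using line subspace_single_0 by simp
  show "?U k \<subseteq> space S k"
    using assms(1) by (auto simp: space_def vscale_def)
  have killed: "mvec (snd S k) (fst S k) z = 0" if z: "z \<in> ?U k" for z
  proof (cases "k = m")
    case True
    then obtain c where "z = vscale c y" using z by auto
    then show ?thesis using True assms(2) by (simp add: mvec_vscale vscale_zero)
  qed (use z in \<open>simp add: mvec_zero\<close>)
  have "0 \<in> ?U (nxt r k)"
    using subspace_0[OF line] by simp
  with killed show "mvec (snd S k) (fst S k) ` ?U k \<subseteq> ?U (nxt r k)"
    by auto
qed

lemma tube_obj_eq_vertex_rep:
  assumes "tube_obj r S" and dim: "\<And>k. fst S k = (if k = m then 1 else 0)"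
    and "mvec (snd S m) (fst S m) (unit_vec 0) = 0"
  shows "S = vertex_rep m"
proof -
  have corner: "snd S m a 0 = 0" for a
    using assms(3) by (simp add: dim mvec_def unit_vec_def fun_eq_iff)
  have arrow: "\<And>k a b. fst S k \<le> b \<Longrightarrow> snd S k a b = 0"
    using assms(1) by (simp add: tube_obj_def)
  have "snd S k a b = 0" for k a b
  proof (cases "k = m \<and> b = 0")
    case False
    then have "fst S k \<le> b" by (auto simp: dim)
    then show ?thesis by (rule arrow)
  qed (simp add: corner)
  then have "snd S = (\<lambda>_ _ _. 0)" by (simp add: fun_eq_iff)
  moreover have "fst S = (\<lambda>k. if k = m then 1 else 0)" by (simp add: fun_eq_iff dim)
  ultimately show ?thesis by (metis prod.collapse vertex_rep_def)
qed

lemma simple_obj_spaces: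
  assumes "simple_obj r S" "m < r" "y \<in> space S m" "y \<noteq> 0"
    and "mvec (snd S m) (fst S m) y = 0"
  shows "space S m = range (\<lambda>c. vscale c y)"
    and "\<And>k. k < r \<Longrightarrow> k \<noteq> m \<Longrightarrow> space S k = {0}"
proof -
  define U where "U = (\<lambda>k. if k = m then range (\<lambda>c. vscale c y) else {0})"
  have "subrep r S U"
    unfolding U_def by (rule subrep_vertex_line[OF assms(3,5)])
  then have "(\<forall>i<r. U i = {0}) \<or> (\<forall>i<r. U i = space S i)"
    using assms(1) by (simp add: simple_obj_def)
  moreover have "y \<in> U m" by (auto simp: U_def vscale_def intro: range_eqI[of _ _ 1])
  ultimately have spaces: "\<forall>i<r. U i = space S i"
    using assms(2,4) by blast
  then show "space S m = range (\<lambda>c. vscale c y)"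
    using assms(2) by (metis U_def)
  show "space S k = {0}" if "k < r" "k \<noteq> m" for k
    using spaces that by (metis U_def)
qed

lemma simple_obj_eq_vertex_rep:
  assumes "simple_obj r S"
  shows "\<exists>m<r. S = vertex_rep m"
proof -
  have tube: "tube_obj r S" using assms by (simp add: simple_obj_def)
  obtain v where "v < r" "0 < fst S v" using assms by (auto simp: simple_obj_def)
  then obtain m y where m: "m < r" and y: "y \<in> space S m" "y \<noteq> 0"
    and killed: "mvec (snd S m) (fst S m) y = 0"
    using tube_obj_killed_vector[OF tube] by metis
  note line = simple_obj_spaces(1)[OF assms m y killed]
    and trivial = simple_obj_spaces(2)[OF assms m y killed]
  have "0 < fst S m"
    using y by (auto simp: space_def fun_eq_iff)
  then have dim: "fst S k = (if k = m then 1 else 0)" for k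
    using tube dim_le_1_if_space_line[of S m y] dim_eq_0_if_space_trivial[of S k] line trivial
    by (cases "k < r") (auto simp: tube_obj_def)
  have "unit_vec 0 \<in> space S m" by (simp add: unit_vec_in_space_iff dim)
  then obtain c where "unit_vec 0 = vscale c y" using line by auto
  then have "mvec (snd S m) (fst S m) (unit_vec 0) = vscale c (mvec (snd S m) (fst S m) y)"
    by (simp add: mvec_vscale)
  then have "mvec (snd S m) (fst S m) (unit_vec 0) = 0"
    by (simp add: killed vscale_zero)
  then show ?thesis using m tube_obj_eq_vertex_rep[OF tube dim] by blast
qed

section \<open>Arcs of the cycle\<close>

definition arc :: "nat \<Rightarrow> nat \<Rightarrow> nat \<Rightarrow> nat set" where
  "arc r i d = (\<lambda>t. (i + t) mod r) ` {0<..<d}"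

lemma mod_add_mem_arc_iff:
  assumes "d \<le> r" "t < r"
  shows "(i + t) mod r \<in> arc r i d \<longleftrightarrow> 0 < t \<and> t < d"
proof
  assume "(i + t) mod r \<in> arc r i d"
  then obtain t' where "0 < t'" "t' < d" "(i + t) mod r = (i + t') mod r"
    by (auto simp: arc_def)
  moreover have "t' < r" using \<open>t' < d\<close> assms(1) by simp
  ultimately show "0 < t \<and> t < d"
    using mod_add_left_cancel_less[where t = t and t' = t'] assms(2) by metis
qed (auto simp: arc_def)

lemma arc_psubset:
  assumes "0 < r" "d \<le> r"
  shows "arc r i d \<subset> {..<r}"
proof -
  have "arc r i d \<subseteq> {..<r}" using assms(1) by (auto simp: arc_def)
  moreover have "(i + 0) mod r \<notin> arc r i d" using assms by (simp only: mod_add_mem_arc_iff) simp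
  ultimately show ?thesis using assms(1) by auto
qed

lemma start_not_mem_arc: "i < r \<Longrightarrow> d \<le> r \<Longrightarrow> i \<notin> arc r i d"
  using mod_add_mem_arc_iff[of d r 0 i] by simp

lemma end_not_mem_arc: "d < r \<Longrightarrow> (i + d) mod r \<notin> arc r i d"
  using mod_add_mem_arc_iff[of d r d i] by simp

lemma arrow_connected_arc:
  assumes "0 < r" "1 < d"
  shows "arrow_connected r (arc r i d)"
  unfolding arrow_connected_def
proof
  let ?R = "{(k, nxt r k) | k. k \<in> arrows r (arc r i d) (arc r i d)}"
  show "(i + 1) mod r \<in> arc r i d"
    using assms(2) by (auto simp: arc_def intro: image_eqI[of _ _ 1])
  have "((i + 1) mod r, (i + t) mod r) \<in> ?R\<^sup>*" if "0 < t" "t < d" for t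
    using that
  proof (induction t)
    case (Suc t)
    show ?case
    proof (cases "t = 0")
      case False
      then have "(i + t) mod r \<in> arc r i d" "(i + Suc t) mod r \<in> arc r i d"
        using Suc.prems
        by (auto simp: arc_def intro: image_eqI[where x = t] image_eqI[where x = "Suc t"])
      then have "(i + t) mod r \<in> arrows r (arc r i d) (arc r i d)"
        using assms(1) by (simp add: arrows_def nxt_mod_add)
      then have "((i + t) mod r, (i + Suc t) mod r) \<in> ?R" by (force simp: nxt_mod_add)
      with Suc False show ?thesis by (auto intro: rtrancl_into_rtrancl)
    qed simp
  qed simp
  then show "arc r i d \<subseteq> ?R\<^sup>* `` {(i + 1) mod r}" by (auto simp: arc_def)
qed

lemma arrows_into_arc:
  assumes "i < r" "1 < d" "d \<le> r"
  shows "arrows r {i} (arc r i d) = {i}"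
proof -
  have "(i + 1) mod r \<in> arc r i d"
    using assms by (simp only: mod_add_mem_arc_iff) simp
  then show ?thesis using assms(1) by (auto simp: arrows_def nxt_def)
qed

lemma arrows_out_of_arc:
  assumes "1 < d" "d < r"
  shows "arrows r (arc r i d) {(i + d) mod r} = {(i + (d - 1)) mod r}"
proof (intro equalityI subsetI)
  fix k
  assume "k \<in> arrows r (arc r i d) {(i + d) mod r}"
  then obtain t where t: "t < d" "k = (i + t) mod r" "(i + Suc t) mod r = (i + d) mod r"
    by (auto simp: arrows_def arc_def nxt_mod_add)
  then have "Suc t = d"
    using mod_add_left_cancel_less[where t = "Suc t" and t' = d] assms(2) by simp
  then show "k \<in> {(i + (d - 1)) mod r}" using t(2) by auto
next
  fix k
  assume "k \<in> {(i + (d - 1)) mod r}"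
  moreover have "(i + (d - 1)) mod r \<in> arc r i d"
    using assms by (auto simp: arc_def intro: image_eqI[where x = "d - 1"])
  moreover have "nxt r ((i + (d - 1)) mod r) = (i + d) mod r"
    using nxt_mod_add[of r i "d - 1"] assms(1) by simp
  ultimately show "k \<in> arrows r (arc r i d) {(i + d) mod r}"
    using assms(2) by (auto simp: arrows_def)
qed

lemma ext1_dim_into_arc:
  assumes "i < r" "1 < d" "d \<le> r"
  shows "ext1_dim r (thin_rep r {i} :: 'a::field rep) (thin_rep r (arc r i d)) = 1"
proof -
  have "{..<r} \<inter> {i} \<inter> arc r i d = {}"
    using start_not_mem_arc[OF assms(1,3)] by auto
  then show ?thesis by (simp add: ext1_dim_thin_rep arrows_into_arc[OF assms])
qed

lemma ext1_dim_out_of_arc: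
  assumes "1 < d" "d < r"
  shows "ext1_dim r (thin_rep r (arc r i d) :: 'a::field rep) (thin_rep r {(i + d) mod r}) = 1"
proof -
  have "{..<r} \<inter> arc r i d \<inter> {(i + d) mod r} = {}"
    using end_not_mem_arc[OF assms(2)] by auto
  then show ?thesis by (simp add: ext1_dim_thin_rep arrows_out_of_arc[OF assms])
qed

lemma ext1_dim_thin_rep_succ:
  assumes "i < r" "2 \<le> r"
  shows "ext1_dim r (thin_rep r {i} :: 'a::field rep) (thin_rep r {(i + 1) mod r}) = 1"
proof -
  have "{0<..<2::nat} = {1}" by auto
  then have "arc r i 2 = {(i + 1) mod r}" by (simp add: arc_def)
  then show ?thesis using ext1_dim_into_arc[of i r 2] assms by simp
qed

lemma brick_set_arc:
  assumes "i < r" "1 < d" "d < r"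
  shows "brick_set r
    [thin_rep r {i}, thin_rep r {(i + d) mod r}, thin_rep r (arc r i d) :: 'a::field rep]"
proof -
  let ?j = "(i + d) mod r"
  have "i \<noteq> ?j" using mod_add_neq_self[of i r d] assms by simp
  have "?j < r" using assms(3) by simp
  then have "{i} \<subset> {..<r}" "{?j} \<subset> {..<r}" "arc r i d \<subset> {..<r}"
    using singleton_psubset_lessThan[OF assms(1) _ \<open>i \<noteq> ?j\<close>]
      singleton_psubset_lessThan[OF _ assms(1) \<open>i \<noteq> ?j\<close>[symmetric]] arc_psubset[of r d i] assms
    by simp_all
  then have "\<forall>Q\<in>set [{i}, {?j}, arc r i d]. Q \<subset> {..<r} \<and> arrow_connected r Q"
    using arrow_connected_arc[of r d i] assms by (simp add: arrow_connected_singleton)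
  moreover have "distinct [{i}, {?j}, arc r i d]" "pairwise disjnt (set [{i}, {?j}, arc r i d])"
    using \<open>i \<noteq> ?j\<close> start_not_mem_arc[of i r d] end_not_mem_arc[of d r i] assms
    by (auto simp: pairwise_def disjnt_def)
  ultimately show ?thesis
    using brick_set_thin_reps[of "[{i}, {?j}, arc r i d]" r] by simp
qed

lemma exists_mod_add_eq:
  fixes i j r :: nat
  assumes "i < r" "j < r" "i \<noteq> j"
  obtains d where "0 < d" "d < r" "j = (i + d) mod r"
proof (cases "i < j")
  case True
  then show thesis using that[of "j - i"] assms(2) by simp
next
  case False
  then show thesis using that[of "j + r - i"] assms by simp
qed

theorem lemma5p3:
  fixes r :: nat and S1 S2 :: "'a::field rep"
  assumes "alg_closed TYPE('a)"
    and "r \<ge> 1"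
    and "simple_obj r S1" and "simple_obj r S2"
    and "\<not> iso r S1 S2"
    and "ext1_dim r S1 S2 = 0"
  shows "\<exists>M. tube_obj r M \<and> ext1_dim r S1 M = 1 \<and> ext1_dim r M S2 = 1 \<and>
             brick_set r [S1, S2, M]"
proof -
  obtain i j where i: "i < r" "S1 = vertex_rep i" and j: "j < r" "S2 = vertex_rep j"
    using simple_obj_eq_vertex_rep assms(3,4) by metis
  have "i \<noteq> j"
    using assms(3,5) iso_refl[of r S1] i j by (auto simp: simple_obj_def)
  then have "2 \<le> r" using i(1) j(1) by linarith
  then have S1: "S1 = thin_rep r {i}" and S2: "S2 = thin_rep r {j}"
    using i j by (simp_all add: thin_rep_singleton)
  obtain d where d: "0 < d" "d < r" "j = (i + d) mod r"
    using exists_mod_add_eq[OF i(1) j(1) \<open>i \<noteq> j\<close>] .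
  have "d \<noteq> 1"
  proof
    assume "d = 1"
    then have "ext1_dim r S1 S2 = 1"
      using ext1_dim_thin_rep_succ[OF i(1) \<open>2 \<le> r\<close>] S1 S2 d(3) by simp
    then show False using assms(6) by simp
  qed
  then have "1 < d" using d(1) by simp
  let ?M = "thin_rep r (arc r i d) :: 'a rep"
  have "tube_obj r ?M"
    using tube_obj_thin_rep arc_psubset[of r d i] d(2) by simp
  moreover have "ext1_dim r S1 ?M = 1" "ext1_dim r ?M S2 = 1"
    using ext1_dim_into_arc[OF i(1) \<open>1 < d\<close>] ext1_dim_out_of_arc[OF \<open>1 < d\<close> d(2)] d S1 S2
    by simp_all
  moreover have "brick_set r [S1, S2, ?M]"
    using brick_set_arc[OF i(1) \<open>1 < d\<close> d(2)] S1 S2 d(3) by simp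
  ultimately show ?thesis by blast
qed

end
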